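(* Let $K$ be a finite simplicial complex, $f$ an injective filtration function on $K$, $n$ a positive integer, and $\alpha$ an $n$-cycle whose class $[\alpha]\in H_n(K^f_a)$ is born at $a$ and terminated at a finite value $b>a$. Let $D=(0,\frac{b-a}{2}]$, let $\sigma_1,\ldots,\sigma_m$ be the $(n+1)$-simplices of $K$ and let $\Pi_\varepsilon$ ($\varepsilon\in D$) be as in the context. Suppose $t\in D$ is a point of discontinuity of $\varepsilon\mapsto\Pi_\varepsilon$ (i.e. $\Pi_\varepsilon$ is not constant on any neighbourhood of $t$ in $D$). Then there exist $i\neq j$ such that $2t=|f(\sigma_i)-f(\sigma_j)|$.
   Context: A filtration function on a finite simplicial complex $K$ is a map $f\colon K\to\mathbb{R}$ with $f(\sigma)\le f(\tau)$ whenever $\sigma$ is a face of $\tau$. Sublevel complexes are $K^f_r=f^{-1}((-\infty,r])$; homology is with coefficients in a fixed field. For a nontrivial class $[\alpha]\in H_n(K^f_r)$, its birth is the infimum of $q\le r$ such that $[\alpha]$ is in the image of $H_n(K^f_q)\to H_n(K^f_r)$, and its termination scale is the infimum of $q\ge r$ such that $[\alpha]$ maps to $0$ in $H_n(K^f_q)$. $\|f-g\|_\infty=\max_{\sigma\in K}|f(\sigma)-g(\sigma)|$. An injective $\varepsilon$-perturbation of $f$ is an injective filtration function $g$ with $\|f-g\|_\infty\le\varepsilon$. Each injective filtration function $g$ induces a linear ordering of the $(n+1)$-simplices $\{\sigma_1,\dots,\sigma_m\}$ by increasing $g$-value, regarded as a permutation in $S_m$; $\Pi_\varepsilon$ is the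 set of all permutations so induced by injective $\varepsilon$-perturbations of $f$. *)

theory Defs
  imports "HOL-Analysis.Analysis" "HOL-Combinatorics.Permutations"
begin

text \<open>Abstract finite simplicial complexes: a simplex is a nonempty finite set of
vertices; a complex is closed under taking nonempty faces.  Vertices carry a linear
order, used to orient simplices.\<close>

definition simplicial_complex :: "'v set set \<Rightarrow> bool" where
  "simplicial_complex K \<longleftrightarrow>
     (\<forall>\<sigma>\<in>K. finite \<sigma> \<and> \<sigma> \<noteq> {}) \<and>
     (\<forall>\<sigma>\<in>K. \<forall>\<tau>. \<tau> \<subseteq> \<sigma> \<and> \<tau> \<noteq> {} \<longrightarrow> \<tau> \<in> K)"

definition filtration_function :: "'v set set \<Rightarrow> ('v set \<Rightarrow> real) \<Rightarrow> bool" where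
  "filtration_function K f \<longleftrightarrow> (\<forall>\<sigma>\<in>K. \<forall>\<tau>\<in>K. \<sigma> \<subseteq> \<tau> \<longrightarrow> f \<sigma> \<le> f \<tau>)"

definition sublevel :: "'v set set \<Rightarrow> ('v set \<Rightarrow> real) \<Rightarrow> real \<Rightarrow> 'v set set" where
  "sublevel K f r = {\<sigma>\<in>K. f \<sigma> \<le> r}"

definition simplices :: "'v set set \<Rightarrow> nat \<Rightarrow> 'v set set" where
  "simplices L n = {\<sigma>\<in>L. card \<sigma> = Suc n}"

text \<open>Simplicial n-chains of L with coefficients in a field 'k: functions on simplices
supported on the n-simplices of L (the orientation is the one induced by the vertex order).\<close>
definition chain :: "'v set set \<Rightarrow> nat \<Rightarrow> ('v set \<Rightarrow> 'k::field) \<Rightarrow> bool" where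
  "chain L n c \<longleftrightarrow> (\<forall>\<sigma>. c \<sigma> \<noteq> 0 \<longrightarrow> \<sigma> \<in> simplices L n)"

text \<open>Incidence number [\<sigma> : \<tau>] = (-1)^i if \<tau> is \<sigma> with its i-th vertex (in increasing
order, counting from 0) removed, and 0 otherwise.\<close>
definition incidence :: "'v::linorder set \<Rightarrow> 'v set \<Rightarrow> 'k::field" where
  "incidence \<sigma> \<tau> =
     (if \<exists>v\<in>\<sigma>. \<tau> = \<sigma> - {v}
      then (- 1) ^ card {x\<in>\<sigma>. x < (THE v. v \<in> \<sigma> \<and> \<tau> = \<sigma> - {v})}
      else 0)"

definition bdry :: "'v::linorder set set \<Rightarrow> ('v set \<Rightarrow> 'k::field) \<Rightarrow> ('v set \<Rightarrow> 'k)" where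
  "bdry K c = (\<lambda>\<tau>. \<Sum>\<sigma>\<in>K. c \<sigma> * incidence \<sigma> \<tau>)"

definition is_cycle :: "'v::linorder set set \<Rightarrow> nat \<Rightarrow> ('v set \<Rightarrow> 'k::field) \<Rightarrow> bool" where
  "is_cycle L n c \<longleftrightarrow> chain L n c \<and> bdry L c = (\<lambda>_. 0)"

definition is_boundary :: "'v::linorder set set \<Rightarrow> nat \<Rightarrow> ('v set \<Rightarrow> 'k::field) \<Rightarrow> bool" where
  "is_boundary L n c \<longleftrightarrow> (\<exists>d. chain L (Suc n) d \<and> bdry L d = c)"

text \<open>Birth of the class [\<alpha>] \<in> H_n(K^f_r): infimum of q \<le> r such that [\<alpha>] lies in the image
of H_n(K^f_q) \<rightarrow> H_n(K^f_r), i.e. \<alpha> is homologous in K^f_r to a cycle of K^f_q.\<close>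
definition birth :: "'v::linorder set set \<Rightarrow> ('v set \<Rightarrow> real) \<Rightarrow> nat \<Rightarrow> real \<Rightarrow> ('v set \<Rightarrow> 'k::field) \<Rightarrow> real" where
  "birth K f n r \<alpha> = Inf {q. q \<le> r \<and> (\<exists>\<beta>. is_cycle (sublevel K f q) n \<beta> \<and>
                                   is_boundary (sublevel K f r) n (\<alpha> - \<beta>))}"

text \<open>Set of scales q \<ge> r at which [\<alpha>] maps to 0 in H_n(K^f_q); the termination scale
is its infimum (finite iff the set is nonempty).\<close>
definition death_scales :: "'v::linorder set set \<Rightarrow> ('v set \<Rightarrow> real) \<Rightarrow> nat \<Rightarrow> real \<Rightarrow> ('v set \<Rightarrow> 'k::field) \<Rightarrow> real set" where
  "death_scales K f n r \<alpha> = {q. q \<ge> r \<and> is_boundary (sublevel K f q) n \<alpha>}"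

definition termination_scale :: "'v::linorder set set \<Rightarrow> ('v set \<Rightarrow> real) \<Rightarrow> nat \<Rightarrow> real \<Rightarrow> ('v set \<Rightarrow> 'k::field) \<Rightarrow> real" where
  "termination_scale K f n r \<alpha> = Inf (death_scales K f n r \<alpha>)"

definition inj_perturbation :: "'v set set \<Rightarrow> ('v set \<Rightarrow> real) \<Rightarrow> real \<Rightarrow> ('v set \<Rightarrow> real) \<Rightarrow> bool" where
  "inj_perturbation K f \<epsilon> g \<longleftrightarrow> filtration_function K g \<and> inj_on g K \<and>
     (\<forall>\<sigma>\<in>K. \<bar>f \<sigma> - g \<sigma>\<bar> \<le> \<epsilon>)"

text \<open>\<Pi>_\<epsilon>: with the (n+1)-simplices enumerated as s 0, ..., s (m-1), the permutations \<pi>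
of {..<m} such that s (\<pi> 0), ..., s (\<pi> (m-1)) lists them in increasing g-value, for some
injective \<epsilon>-perturbation g of f.\<close>
definition Pi_perm :: "'v set set \<Rightarrow> ('v set \<Rightarrow> real) \<Rightarrow> nat \<Rightarrow> (nat \<Rightarrow> 'v set) \<Rightarrow> real \<Rightarrow> (nat \<Rightarrow> nat) set" where
  "Pi_perm K f m s \<epsilon> = {\<pi>. \<pi> permutes {..<m} \<and>
     (\<exists>g. inj_perturbation K f \<epsilon> g \<and>
          (\<forall>i<m. \<forall>j<m. i < j \<longrightarrow> g (s (\<pi> i)) < g (s (\<pi> j))))}"

end

theory Submission
  imports Defs
begin

text \<open>The set \<open>\<Pi>\<^sub>\<epsilon>\<close> only changes when \<open>2\<epsilon>\<close> crosses a gap \<open>\<bar>f \<sigma>\<^sub>i - f \<sigma>\<^sub>j\<bar>\<close>.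
  Indeed, if no gap lies in \<open>[2\<epsilon>, 2\<epsilon>')\<close>, then an ordering of the \<open>\<sigma>\<^sub>i\<close> realised by an
  \<open>\<epsilon>'\<close>-perturbation \<open>g'\<close> never puts \<open>\<sigma>\<^sub>i\<close> before \<open>\<sigma>\<^sub>j\<close> when \<open>f \<sigma>\<^sub>i - f \<sigma>\<^sub>j \<ge> 2\<epsilon>\<close>.
  The smallest function above \<open>f - \<epsilon>\<close> that is monotone both along faces and along the
  \<open>g'\<close>-order of the \<open>\<sigma>\<^sub>i\<close> then stays below \<open>f + \<epsilon>\<close>, and adding a small generic multiple
  of \<open>g'\<close> breaks its ties; this is an injective \<open>\<epsilon>\<close>-perturbation realising the same
  ordering.  Since \<open>\<Pi>\<^sub>\<epsilon>\<close> also grows with \<open>\<epsilon>\<close>, it is locally constant at every \<open>t\<close> with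
  \<open>2t\<close> not a gap.  Only the finiteness of \<open>K\<close>, the filtration property of \<open>f\<close> and the
  interval \<open>D\<close> enter the argument.\<close>

lemma Pi_perm_mono:
  assumes "\<epsilon> \<le> \<epsilon>'"
  shows "Pi_perm K f m s \<epsilon> \<subseteq> Pi_perm K f m s \<epsilon>'"
  using assms unfolding Pi_perm_def inj_perturbation_def by (blast intro: order_trans)

lemma injective_tie_break:
  fixes A B h :: "'a \<Rightarrow> real"
  assumes "finite K" and "inj_on h K" and "\<forall>\<sigma>\<in>K. A \<sigma> < B \<sigma>"
  obtains g where "inj_on g K" and "\<forall>\<sigma>\<in>K. A \<sigma> \<le> g \<sigma> \<and> g \<sigma> \<le> B \<sigma>"
    and "\<forall>\<sigma>\<in>K. \<forall>\<tau>\<in>K. A \<sigma> \<le> A \<tau> \<longrightarrow> h \<sigma> \<le> h \<tau> \<longrightarrow> g \<sigma> \<le> g \<tau>"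
proof -
  define c where "c = Min (insert 0 (h ` K))"
  have c: "c \<le> h \<sigma>" if "\<sigma> \<in> K" for \<sigma>
    unfolding c_def using assms(1) that by auto
  define \<eta>\<^sub>0 where "\<eta>\<^sub>0 = Min (insert 1 ((\<lambda>\<sigma>. (B \<sigma> - A \<sigma>) / (h \<sigma> - c + 1)) ` K))"
  have "(B \<sigma> - A \<sigma>) / (h \<sigma> - c + 1) > 0" if "\<sigma> \<in> K" for \<sigma>
    using assms(3) c[OF that] that by (intro divide_pos_pos) auto
  then have "\<eta>\<^sub>0 > 0"
    unfolding \<eta>\<^sub>0_def using assms(1) by simp
  have \<eta>\<^sub>0_le: "\<eta>\<^sub>0 * (h \<sigma> - c + 1) \<le> B \<sigma> - A \<sigma>" if "\<sigma> \<in> K" for \<sigma>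
  proof -
    have "\<eta>\<^sub>0 \<le> (B \<sigma> - A \<sigma>) / (h \<sigma> - c + 1)"
      unfolding \<eta>\<^sub>0_def using assms(1) that by auto
    then show ?thesis
      using c[OF that] by (simp add: le_divide_eq)
  qed
  \<comment> \<open>\<open>\<eta>\<close> avoids the finitely many slopes at which two values of \<open>A + \<eta> h\<close> could collide.\<close>
  define slopes where "slopes = (\<lambda>(\<sigma>, \<tau>). (A \<sigma> - A \<tau>) / (h \<tau> - h \<sigma>)) ` (K \<times> K)"
  have "infinite ({0<..<\<eta>\<^sub>0} - slopes)"
    using \<open>\<eta>\<^sub>0 > 0\<close> assms(1) unfolding slopes_def by (intro Diff_infinite_finite) auto
  then obtain \<eta> where \<eta>: "0 < \<eta>" "\<eta> < \<eta>\<^sub>0" "\<eta> \<notin> slopes"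
    by (metis DiffE finite.emptyI greaterThanLessThan_iff ex_in_conv)
  define g where "g \<sigma> = A \<sigma> + \<eta> * (h \<sigma> - c)" for \<sigma>
  show thesis
  proof
    show "inj_on g K"
    proof (rule inj_onI, rule ccontr)
      fix \<sigma> \<tau> assume "\<sigma> \<in> K" "\<tau> \<in> K" "g \<sigma> = g \<tau>" "\<sigma> \<noteq> \<tau>"
      then have "h \<tau> - h \<sigma> \<noteq> 0" and "A \<sigma> - A \<tau> = \<eta> * (h \<tau> - h \<sigma>)"
        using assms(2) by (auto simp: inj_on_def g_def algebra_simps)
      then have "\<eta> = (A \<sigma> - A \<tau>) / (h \<tau> - h \<sigma>)"
        by (simp add: field_simps)
      then have "\<eta> \<in> slopes"
        unfolding slopes_def using \<open>\<sigma> \<in> K\<close> \<open>\<tau> \<in> K\<close> by (auto intro!: image_eqI[where x = "(\<sigma>, \<tau>)"])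
      then show False
        using \<eta> by simp
    qed
    show "\<forall>\<sigma>\<in>K. A \<sigma> \<le> g \<sigma> \<and> g \<sigma> \<le> B \<sigma>"
    proof
      fix \<sigma> assume "\<sigma> \<in> K"
      have "\<eta> * (h \<sigma> - c + 1) \<le> \<eta>\<^sub>0 * (h \<sigma> - c + 1)"
        using \<eta> c[OF \<open>\<sigma> \<in> K\<close>] by (intro mult_right_mono) auto
      then show "A \<sigma> \<le> g \<sigma> \<and> g \<sigma> \<le> B \<sigma>"
        using \<eta>\<^sub>0_le[OF \<open>\<sigma> \<in> K\<close>] c[OF \<open>\<sigma> \<in> K\<close>] \<eta>(1) unfolding g_def
        by (simp add: algebra_simps)
    qed
    show "\<forall>\<sigma>\<in>K. \<forall>\<tau>\<in>K. A \<sigma> \<le> A \<tau> \<longrightarrow> h \<sigma> \<le> h \<tau> \<longrightarrow> g \<sigma> \<le> g \<tau>"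
      unfolding g_def using \<eta>(1) by (auto intro!: add_mono mult_left_mono)
  qed
qed

lemma filtration_respecting_order:
  fixes f h :: "'v set \<Rightarrow> real"
  assumes f: "filtration_function K f" and h: "filtration_function K h"
    and "finite S" and "S \<subseteq> K" and "\<epsilon> > 0"
    and close: "\<forall>\<rho>\<in>S. \<forall>\<tau>\<in>S. h \<rho> \<le> h \<tau> \<longrightarrow> f \<rho> < f \<tau> + 2 * \<epsilon>"
  obtains A where "filtration_function K A" and "\<forall>\<sigma>\<in>K. f \<sigma> - \<epsilon> \<le> A \<sigma> \<and> A \<sigma> < f \<sigma> + \<epsilon>"
    and "\<forall>\<rho>\<in>S. \<forall>\<tau>\<in>S. h \<rho> \<le> h \<tau> \<longrightarrow> A \<rho> \<le> A \<tau>"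
proof -
  have f_mono: "f \<tau> \<le> f \<sigma>" and h_mono: "h \<tau> \<le> h \<sigma>" if "\<tau> \<in> K" "\<sigma> \<in> K" "\<tau> \<subseteq> \<sigma>" for \<tau> \<sigma>
    using f h that unfolding filtration_function_def by blast+
  define below where "below \<sigma> = insert \<sigma> {\<rho>\<in>S. \<exists>\<tau>\<in>S. \<tau> \<subseteq> \<sigma> \<and> h \<rho> \<le> h \<tau>}" for \<sigma>
  define A where "A \<sigma> = Max (f ` below \<sigma>) - \<epsilon>" for \<sigma>
  have fin: "finite (f ` below \<sigma>)" for \<sigma>
    using \<open>finite S\<close> by (auto intro: finite_subset[of _ "insert \<sigma> S"] simp: below_def)
  have ne: "f ` below \<sigma> \<noteq> {}" for \<sigma>
    by (simp add: below_def)
  have self_le: "f \<sigma> \<le> Max (f ` below \<sigma>)" for \<sigma>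
    using fin by (simp add: below_def)
  show thesis
  proof
    show "filtration_function K A"
      unfolding filtration_function_def
    proof (intro ballI impI)
      fix \<sigma> \<sigma>' assume "\<sigma> \<in> K" "\<sigma>' \<in> K" "\<sigma> \<subseteq> \<sigma>'"
      then have "f \<sigma> \<le> Max (f ` below \<sigma>')"
        using f_mono self_le order_trans by blast
      moreover have "below \<sigma> \<subseteq> insert \<sigma> (below \<sigma>')"
        using \<open>\<sigma> \<subseteq> \<sigma>'\<close> unfolding below_def by blast
      ultimately show "A \<sigma> \<le> A \<sigma>'"
        unfolding A_def using fin ne by (auto simp: Max_le_iff)
    qed
    show "\<forall>\<sigma>\<in>K. f \<sigma> - \<epsilon> \<le> A \<sigma> \<and> A \<sigma> < f \<sigma> + \<epsilon>"
    proof
      fix \<sigma> assume "\<sigma> \<in> K"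
      have "f \<rho> < f \<sigma> + 2 * \<epsilon>" if \<rho>: "\<rho> \<in> below \<sigma>" for \<rho>
      proof (cases "\<rho> = \<sigma>")
        case False
        then obtain \<tau> where "\<rho> \<in> S" "\<tau> \<in> S" "\<tau> \<subseteq> \<sigma>" "h \<rho> \<le> h \<tau>"
          using \<rho> unfolding below_def by blast
        then have "f \<rho> < f \<tau> + 2 * \<epsilon>" and "f \<tau> \<le> f \<sigma>"
          using close f_mono \<open>S \<subseteq> K\<close> \<open>\<sigma> \<in> K\<close> by auto
        then show ?thesis
          by linarith
      qed (use \<open>\<epsilon> > 0\<close> in simp)
      then have "Max (f ` below \<sigma>) < f \<sigma> + 2 * \<epsilon>"
        using fin ne by simp
      then show "f \<sigma> - \<epsilon> \<le> A \<sigma> \<and> A \<sigma> < f \<sigma> + \<epsilon>"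
        unfolding A_def using self_le[of \<sigma>] by simp
    qed
    show "\<forall>\<rho>\<in>S. \<forall>\<tau>\<in>S. h \<rho> \<le> h \<tau> \<longrightarrow> A \<rho> \<le> A \<tau>"
    proof (intro ballI impI)
      fix \<rho> \<tau> assume "\<rho> \<in> S" "\<tau> \<in> S" "h \<rho> \<le> h \<tau>"
      have "below \<rho> \<subseteq> below \<tau>"
      proof
        fix \<rho>' assume \<rho>': "\<rho>' \<in> below \<rho>"
        have "\<rho>' \<in> S \<and> h \<rho>' \<le> h \<rho>"
        proof (cases "\<rho>' = \<rho>")
          case False
          then obtain \<tau>' where "\<rho>' \<in> S" "\<tau>' \<in> S" "\<tau>' \<subseteq> \<rho>" "h \<rho>' \<le> h \<tau>'"
            using \<rho>' unfolding below_def by blast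
          moreover from this have "h \<tau>' \<le> h \<rho>"
            using h_mono \<open>\<rho> \<in> S\<close> \<open>S \<subseteq> K\<close> by blast
          ultimately show ?thesis
            by simp
        qed (use \<open>\<rho> \<in> S\<close> in simp)
        then show "\<rho>' \<in> below \<tau>"
          using \<open>\<tau> \<in> S\<close> \<open>h \<rho> \<le> h \<tau>\<close> unfolding below_def by auto
      qed
      then show "A \<rho> \<le> A \<tau>"
        unfolding A_def using Max_mono[OF image_mono ne fin] by simp
    qed
  qed
qed

lemma Pi_perm_subset_if_no_gap:
  assumes "finite K" and f: "filtration_function K f" and s: "\<forall>i<m. s i \<in> K" and "\<epsilon> > 0"
    and no_gap: "\<forall>i<m. \<forall>j<m. i \<noteq> j \<longrightarrow> \<bar>f (s i) - f (s j)\<bar> \<notin> {2 * \<epsilon>..<2 * \<epsilon>'}"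
  shows "Pi_perm K f m s \<epsilon>' \<subseteq> Pi_perm K f m s \<epsilon>"
proof
  fix \<pi> assume "\<pi> \<in> Pi_perm K f m s \<epsilon>'"
  then obtain g' where \<pi>: "\<pi> permutes {..<m}" and "inj_perturbation K f \<epsilon>' g'"
    and g'_order: "\<forall>i<m. \<forall>j<m. i < j \<longrightarrow> g' (s (\<pi> i)) < g' (s (\<pi> j))"
    unfolding Pi_perm_def by blast
  then have g': "filtration_function K g'" "inj_on g' K" "\<forall>\<sigma>\<in>K. \<bar>f \<sigma> - g' \<sigma>\<bar> \<le> \<epsilon>'"
    unfolding inj_perturbation_def by auto
  define S where "S = s ` {..<m}"
  have "S \<subseteq> K"
    using s unfolding S_def by auto
  have close: "\<forall>\<rho>\<in>S. \<forall>\<tau>\<in>S. g' \<rho> \<le> g' \<tau> \<longrightarrow> f \<rho> < f \<tau> + 2 * \<epsilon>"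
  proof (intro ballI impI)
    fix \<rho> \<tau> assume "\<rho> \<in> S" "\<tau> \<in> S" "g' \<rho> \<le> g' \<tau>"
    then obtain i j where ij: "i < m" "j < m" "\<rho> = s i" "\<tau> = s j"
      unfolding S_def by blast
    show "f \<rho> < f \<tau> + 2 * \<epsilon>"
    proof (cases "\<rho> = \<tau>")
      case False
      then have "g' \<rho> < g' \<tau>"
        using \<open>g' \<rho> \<le> g' \<tau>\<close> g'(2) \<open>\<rho> \<in> S\<close> \<open>\<tau> \<in> S\<close> \<open>S \<subseteq> K\<close> by (metis inj_onD order_less_le subsetD)
      moreover have "\<bar>f \<rho> - g' \<rho>\<bar> \<le> \<epsilon>'" "\<bar>f \<tau> - g' \<tau>\<bar> \<le> \<epsilon>'"
        using g'(3) \<open>\<rho> \<in> S\<close> \<open>\<tau> \<in> S\<close> \<open>S \<subseteq> K\<close> by auto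
      ultimately have "f \<rho> - f \<tau> < 2 * \<epsilon>'"
        by linarith
      show ?thesis
      proof (cases "f \<rho> \<le> f \<tau>")
        case False
        then have "\<bar>f (s i) - f (s j)\<bar> < 2 * \<epsilon>'" and "i \<noteq> j"
          using \<open>f \<rho> - f \<tau> < 2 * \<epsilon>'\<close> \<open>\<rho> \<noteq> \<tau>\<close> ij by auto
        then have "\<bar>f (s i) - f (s j)\<bar> < 2 * \<epsilon>"
          using no_gap ij by force
        then show ?thesis
          using ij(3,4) by (simp add: abs_less_iff)
      qed (use \<open>\<epsilon> > 0\<close> in linarith)
    qed (use \<open>\<epsilon> > 0\<close> in simp)
  qed
  obtain A where A: "filtration_function K A" "\<forall>\<sigma>\<in>K. f \<sigma> - \<epsilon> \<le> A \<sigma> \<and> A \<sigma> < f \<sigma> + \<epsilon>"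
    and A_order: "\<forall>\<rho>\<in>S. \<forall>\<tau>\<in>S. g' \<rho> \<le> g' \<tau> \<longrightarrow> A \<rho> \<le> A \<tau>"
    using filtration_respecting_order[OF f g'(1) _ \<open>S \<subseteq> K\<close> \<open>\<epsilon> > 0\<close> close] S_def by blast
  obtain g where g: "inj_on g K" "\<forall>\<sigma>\<in>K. A \<sigma> \<le> g \<sigma> \<and> g \<sigma> \<le> f \<sigma> + \<epsilon>"
    and g_mono: "\<forall>\<sigma>\<in>K. \<forall>\<tau>\<in>K. A \<sigma> \<le> A \<tau> \<longrightarrow> g' \<sigma> \<le> g' \<tau> \<longrightarrow> g \<sigma> \<le> g \<tau>"
    using injective_tie_break[OF \<open>finite K\<close> g'(2), of A "\<lambda>\<sigma>. f \<sigma> + \<epsilon>"] A(2) by blast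
  have "filtration_function K g"
    using A(1) g'(1) g_mono unfolding filtration_function_def by blast
  then have "inj_perturbation K f \<epsilon> g"
    using g A(2) unfolding inj_perturbation_def by fastforce
  moreover have "g (s (\<pi> i)) < g (s (\<pi> j))" if "i < m" "j < m" "i < j" for i j
  proof -
    have "\<pi> i < m" "\<pi> j < m"
      using that permutes_in_image[OF \<pi>] by auto
    then have in_S: "s (\<pi> i) \<in> S" "s (\<pi> j) \<in> S"
      unfolding S_def by auto
    have "g' (s (\<pi> i)) < g' (s (\<pi> j))"
      using g'_order that by blast
    then have "g (s (\<pi> i)) \<le> g (s (\<pi> j))" and "s (\<pi> i) \<noteq> s (\<pi> j)"
      using g_mono A_order in_S \<open>S \<subseteq> K\<close> by (auto simp: subset_iff)
    then show ?thesis
      using g(1) in_S \<open>S \<subseteq> K\<close> by (metis inj_onD order_less_le subsetD)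
  qed
  ultimately show "\<pi> \<in> Pi_perm K f m s \<epsilon>"
    unfolding Pi_perm_def using \<pi> by blast
qed

lemma Pi_perm_eq_if_no_gap:
  assumes "finite K" and "filtration_function K f" and "\<forall>i<m. s i \<in> K"
    and "0 < \<epsilon>" and "\<epsilon> \<le> \<epsilon>'"
    and "\<forall>i<m. \<forall>j<m. i \<noteq> j \<longrightarrow> \<bar>f (s i) - f (s j)\<bar> \<notin> {2 * \<epsilon>..<2 * \<epsilon>'}"
  shows "Pi_perm K f m s \<epsilon> = Pi_perm K f m s \<epsilon>'"
proof
  show "Pi_perm K f m s \<epsilon>' \<subseteq> Pi_perm K f m s \<epsilon>"
    using assms by (intro Pi_perm_subset_if_no_gap)
qed (rule Pi_perm_mono[OF \<open>\<epsilon> \<le> \<epsilon>'\<close>])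

lemma Pi_perm_locally_constant:
  assumes "finite K" and "filtration_function K f" and s: "\<forall>i<m. s i \<in> K" and "t > 0"
    and no_tie: "\<forall>i<m. \<forall>j<m. i \<noteq> j \<longrightarrow> \<bar>f (s i) - f (s j)\<bar> \<noteq> 2 * t"
  obtains \<delta> where "\<delta> > 0" and "\<forall>\<epsilon>>0. \<bar>\<epsilon> - t\<bar> < \<delta> \<longrightarrow> Pi_perm K f m s \<epsilon> = Pi_perm K f m s t"
proof -
  define gaps where "gaps = {\<bar>f (s i) - f (s j)\<bar> | i j. i < m \<and> j < m \<and> i \<noteq> j}"
  have "finite gaps"
    unfolding gaps_def by (rule finite_subset[of _ "(\<lambda>(i, j). \<bar>f (s i) - f (s j)\<bar>) ` ({..<m} \<times> {..<m})"]) auto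
  then obtain \<delta> where "\<delta> > 0" and \<delta>: "\<forall>d\<in>gaps. d \<noteq> 2 * t \<longrightarrow> \<delta> \<le> dist (2 * t) d"
    using finite_set_avoid by blast
  have "Pi_perm K f m s \<epsilon> = Pi_perm K f m s t" if "\<epsilon> > 0" "\<bar>\<epsilon> - t\<bar> < \<delta> / 2" for \<epsilon>
  proof -
    have "\<forall>i<m. \<forall>j<m. i \<noteq> j \<longrightarrow> \<bar>f (s i) - f (s j)\<bar> \<notin> {2 * min \<epsilon> t..<2 * max \<epsilon> t}"
    proof (intro allI impI)
      fix i j assume "i < m" "j < m" "i \<noteq> j"
      then have "\<bar>f (s i) - f (s j)\<bar> \<in> gaps" and "\<bar>f (s i) - f (s j)\<bar> \<noteq> 2 * t"
        using no_tie unfolding gaps_def by blast+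
      then have "\<delta> \<le> \<bar>2 * t - \<bar>f (s i) - f (s j)\<bar>\<bar>"
        using \<delta> by (simp add: dist_real_def)
      then show "\<bar>f (s i) - f (s j)\<bar> \<notin> {2 * min \<epsilon> t..<2 * max \<epsilon> t}"
        using that(2) unfolding atLeastLessThan_iff by arith
    qed
    then show ?thesis
      using Pi_perm_eq_if_no_gap[OF assms(1,2) s, of "min \<epsilon> t" "max \<epsilon> t"] that(1) \<open>t > 0\<close>
      by (cases "\<epsilon> \<le> t") auto
  qed
  then show thesis
    using that[of "\<delta> / 2"] \<open>\<delta> > 0\<close> by simp
qed

theorem lemma3p2:
  fixes K :: "'v::linorder set set" and f :: "'v set \<Rightarrow> real"
    and n m :: nat and s :: "nat \<Rightarrow> 'v set"
    and \<alpha> :: "'v set \<Rightarrow> 'k::field" and a b t :: real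
  assumes "simplicial_complex K" and "finite K"
    and "filtration_function K f" and "inj_on f K"
    and "n > 0"
    and "is_cycle (sublevel K f a) n \<alpha>"
    and "\<not> is_boundary (sublevel K f a) n \<alpha>"
    and "birth K f n a \<alpha> = a"
    and "death_scales K f n a \<alpha> \<noteq> {}"
    and "termination_scale K f n a \<alpha> = b"
    and "a < b"
    and "bij_betw s {..<m} (simplices K (Suc n))"
    and "t \<in> {0<..(b - a) / 2}"
    and "\<not> (\<exists>\<delta>>0. \<forall>\<epsilon>\<in>{0<..(b - a) / 2}. \<bar>\<epsilon> - t\<bar> < \<delta> \<longrightarrow> Pi_perm K f m s \<epsilon> = Pi_perm K f m s t)"
  shows "\<exists>i<m. \<exists>j<m. i \<noteq> j \<and> 2 * t = \<bar>f (s i) - f (s j)\<bar>"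
proof (rule ccontr)
  assume "\<not> ?thesis"
  then have no_tie: "\<forall>i<m. \<forall>j<m. i \<noteq> j \<longrightarrow> \<bar>f (s i) - f (s j)\<bar> \<noteq> 2 * t"
    by force
  have "\<forall>i<m. s i \<in> K"
    using bij_betw_apply[OF assms(12)] by (auto simp: simplices_def)
  then obtain \<delta> where "\<delta> > 0"
    and "\<forall>\<epsilon>>0. \<bar>\<epsilon> - t\<bar> < \<delta> \<longrightarrow> Pi_perm K f m s \<epsilon> = Pi_perm K f m s t"
    using Pi_perm_locally_constant[OF assms(2,3) _ _ no_tie] assms(13) by auto
  then show False
    using assms(14) by auto
qed

end
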